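(* Let $H$ be a hypergraph with $R(H)=\{1,2\}$ such that the graph $H^2$ of its $2$-edges is bipartite and $H$ contains $K_2^{\{1,2\}}$ as a subgraph. Then $\pi(H)=\frac54$.
   Context: A hypergraph $H=(V,E)$ has finite vertex set $V$ and edge set $E\subseteq 2^V$; $R(H)=\{|F|:F\in E\}$. $H_1\subseteq H_2$ (subgraph) means there is an injective $f\colon V(H_1)\to V(H_2)$ with $f(F)\in E(H_2)$ for all $F\in E(H_1)$. For $G$ on $n$ vertices, $h_n(G)=\sum_{F\in E(G)}1/\binom{n}{|F|}$; $\pi_n(H)=\max\{h_n(G): G\text{ on } n \text{ vertices}, R(G)\subseteq R(H), H\not\subseteq G\}$ and $\pi(H)=\lim_n\pi_n(H)$. $K_2^{\{1,2\}}$ is the hypergraph on vertices $\{1,2\}$ with edges $\{1\},\{2\},\{1,2\}$. *)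

theory Defs
  imports Complex_Main
begin

definition hypergraph :: "'a set \<Rightarrow> 'a set set \<Rightarrow> bool" where
  "hypergraph V E \<longleftrightarrow> finite V \<and> E \<subseteq> Pow V"

definition edge_sizes :: "'a set set \<Rightarrow> nat set" where
  "edge_sizes E = card ` E"

definition subhypergraph :: "'a set \<Rightarrow> 'a set set \<Rightarrow> 'b set \<Rightarrow> 'b set set \<Rightarrow> bool" where
  "subhypergraph V1 E1 V2 E2 \<longleftrightarrow>
     (\<exists>f. inj_on f V1 \<and> f ` V1 \<subseteq> V2 \<and> (\<forall>F\<in>E1. f ` F \<in> E2))"

definition two_graph_bipartite :: "'a set \<Rightarrow> 'a set set \<Rightarrow> bool" where
  "two_graph_bipartite V E \<longleftrightarrow>
     (\<exists>A \<subseteq> V. \<forall>F\<in>E. card F = 2 \<longrightarrow> card (F \<inter> A) = 1)"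

definition K2_12_V :: "nat set" where "K2_12_V = {1, 2}"
definition K2_12_E :: "nat set set" where "K2_12_E = {{1}, {2}, {1, 2}}"

definition h_n :: "nat \<Rightarrow> 'a set set \<Rightarrow> real" where
  "h_n n E = (\<Sum>F\<in>E. 1 / real (n choose card F))"

definition pi_n :: "'a set \<Rightarrow> 'a set set \<Rightarrow> nat \<Rightarrow> real" where
  "pi_n V E n = Max {h_n n G | G. G \<subseteq> Pow {0..<n} \<and> edge_sizes G \<subseteq> edge_sizes E
                                   \<and> \<not> subhypergraph V E {0..<n} G}"

end

theory Submission
  imports Defs
begin

text \<open>
  Lower bound: on n vertices take the singletons of a set X of n div 2 vertices together with
  all pairs not inside X. The edges {a}, {b}, {a, b} of a copy of K_2^{1,2} in H would have to
  go to a pair inside X, so H is not contained, and the density |X|/n + 1 - C(|X|,2)/C(n,2)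
  is at least 5/4.

  Upper bound: let G avoid H and let X be its set of singleton vertices. As the 2-graph of H is
  bipartite, H embeds into any K_{m,m} (m = |V(H)|) formed by pairs of G inside X; by the
  Kovari-Sos-Turan counting argument G therefore has only o(n^2) pairs inside X. Hence
  h_n(G) <= |X|/n + 1 - C(|X|,2)/C(n,2) + o(1), which is 5/4 + o(1) after completing the
  square in |X|.
\<close>

lemma card_neighbourhood_eq_degree:
  assumes "P \<subseteq> {F. card F = 2}"
  shows "card {u. {u, v} \<in> P} = card {F\<in>P. v \<in> F}"
proof -
  have "bij_betw (\<lambda>u. {u, v}) {u. {u, v} \<in> P} {F\<in>P. v \<in> F}"
  proof (rule bij_betwI')
    fix x y assume "x \<in> {u. {u, v} \<in> P}" "y \<in> {u. {u, v} \<in> P}"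
    then have "x \<noteq> v" "y \<noteq> v" using assms by (auto simp: card_insert_if split: if_splits)
    then show "({x, v} = {y, v}) = (x = y)" by (auto simp: doubleton_eq_iff)
  next
    fix F assume F: "F \<in> {F\<in>P. v \<in> F}"
    then obtain a b where "F = {a, b}" using assms by (auto simp: card_2_iff)
    with F show "\<exists>x\<in>{u. {u, v} \<in> P}. F = {x, v}" by (auto simp: insert_commute)
  qed auto
  then show ?thesis by (rule bij_betw_same_card)
qed

lemma sum_card_neighbourhoods:
  assumes X: "finite X" and P: "P \<subseteq> {F. F \<subseteq> X \<and> card F = 2}"
  shows "(\<Sum>v\<in>X. card {u. {u, v} \<in> P}) = 2 * card P"
proof -
  have fP: "finite P" using X P by (auto intro: finite_subset[of _ "Pow X"])
  have "(\<Sum>v\<in>X. card {u. {u, v} \<in> P}) = (\<Sum>v\<in>X. \<Sum>F\<in>P. of_bool (v \<in> F))"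
    using P fP by (subst card_neighbourhood_eq_degree) (auto intro: sum.cong simp: Int_def)
  also have "\<dots> = (\<Sum>F\<in>P. \<Sum>v\<in>X. of_bool (v \<in> F))" by (rule sum.swap)
  also have "\<dots> = (\<Sum>F\<in>P. 2)"
    using P X by (intro sum.cong) (auto simp: Int_commute Int_absorb2 dest!: subsetD[OF P])
  finally show ?thesis by simp
qed

lemma card_high_degree_vertices:
  fixes \<delta> :: real
  assumes "0 \<le> \<delta>" and X: "X \<subseteq> {0..<n}" and P: "P \<subseteq> {F. F \<subseteq> X \<and> card F = 2}"
    and dense: "\<delta> * real n ^ 2 < real (card P)"
  shows "\<delta> * real n < real (card {v\<in>X. \<delta> * real n \<le> real (card {u. {u, v} \<in> P})})"
proof -
  define d where "d v = real (card {u. {u, v} \<in> P})" for v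
  define L where "L = {v\<in>X. \<delta> * real n \<le> d v}"
  have fX: "finite X" and cX: "card X \<le> n" using X by (auto intro: finite_subset card_mono[of "{0..<n}", simplified])
  have "d v \<le> real n" for v
  proof -
    have "{u. {u, v} \<in> P} \<subseteq> X" using P by auto
    then show ?thesis unfolding d_def using fX cX by (meson card_mono le_trans of_nat_le_iff)
  qed
  then have "(\<Sum>v\<in>L. d v) \<le> real (card L) * real n"
    using sum_bounded_above[of L d "real n"] by simp
  moreover have "(\<Sum>v\<in>X - L. d v) \<le> real n * (\<delta> * real n)"
  proof -
    have "(\<Sum>v\<in>X - L. d v) \<le> real (card (X - L)) * (\<delta> * real n)"
      using sum_bounded_above[of "X - L" d "\<delta> * real n"] by (force simp: L_def)
    also have "\<dots> \<le> real n * (\<delta> * real n)"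
      using cX card_mono[OF fX, of "X - L"] \<open>0 \<le> \<delta>\<close> by (intro mult_right_mono) auto
    finally show ?thesis .
  qed
  moreover have "(\<Sum>v\<in>X. d v) = (\<Sum>v\<in>L. d v) + (\<Sum>v\<in>X - L. d v)"
    using fX sum.subset_diff[of L X d] by (auto simp: L_def)
  moreover have "(\<Sum>v\<in>X. d v) = 2 * real (card P)"
    unfolding d_def using sum_card_neighbourhoods[OF fX P] by (metis of_nat_mult of_nat_numeral of_nat_sum)
  ultimately have "\<delta> * real n * real n < real (card L) * real n"
    using dense by (simp add: power2_eq_square algebra_simps)
  then show ?thesis
    unfolding L_def d_def using mult_less_cancel_right[of "\<delta> * real n" "real n"] by auto
qed

lemma common_neighbourhood_pigeonhole:
  assumes Y: "finite Y" and U: "finite U" and N: "\<And>v. v \<in> Y \<Longrightarrow> N v \<subseteq> U"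
    and many: "(m - 1) * (card U choose m) < (\<Sum>v\<in>Y. card (N v) choose m)"
  shows "\<exists>S\<subseteq>U. card S = m \<and> m \<le> card {v\<in>Y. S \<subseteq> N v}"
proof (rule ccontr)
  assume "\<not> ?thesis"
  then have few: "card {v\<in>Y. S \<subseteq> N v} \<le> m - 1" if "S \<in> {S. S \<subseteq> U \<and> card S = m}" for S
    using that by force
  define M where "M = {S. S \<subseteq> U \<and> card S = m}"
  have fM: "finite M" using U by (auto simp: M_def intro: finite_subset[of _ "Pow U"])
  have "(\<Sum>v\<in>Y. card (N v) choose m) = (\<Sum>v\<in>Y. \<Sum>S\<in>M. of_bool (S \<subseteq> N v))"
  proof (intro sum.cong refl)
    fix v assume "v \<in> Y"
    then have "M \<inter> {S. S \<subseteq> N v} = {S. S \<subseteq> N v \<and> card S = m}" using N by (auto simp: M_def)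
    then show "card (N v) choose m = (\<Sum>S\<in>M. of_bool (S \<subseteq> N v))"
      using fM n_subsets[OF finite_subset[OF N[OF \<open>v \<in> Y\<close>] U]] by simp
  qed
  also have "\<dots> = (\<Sum>S\<in>M. \<Sum>v\<in>Y. of_bool (S \<subseteq> N v))" by (rule sum.swap)
  also have "\<dots> = (\<Sum>S\<in>M. card {v\<in>Y. S \<subseteq> N v})" using Y by (simp add: Int_def)
  also have "\<dots> \<le> card M * (m - 1)" using few sum_bounded_above[of M _ "m - 1"] by (simp add: M_def)
  also have "card M = card U choose m" using n_subsets[OF U] by (simp add: M_def)
  finally show False using many by (simp add: mult.commute)
qed

lemma sum_choose_high_degrees:
  fixes \<delta> :: real
  assumes m: "m \<ge> 1" and "0 < \<delta>" and m_le: "real m \<le> \<delta> * real n"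
    and n_big: "(real m - 1) * real m ^ m < \<delta> ^ (m + 1) * real n"
    and L: "\<delta> * real n < real (card L)" and deg: "\<And>v. v \<in> L \<Longrightarrow> \<delta> * real n \<le> real (d v)"
  shows "(real m - 1) * real n ^ m < (\<Sum>v\<in>L. real (d v choose m))"
proof -
  have n: "real n > 0" using m m_le \<open>0 < \<delta>\<close> by (auto simp: zero_less_mult_iff intro: ccontr)
  have pos: "(\<delta> * real n / real m) ^ m > 0" using n m \<open>0 < \<delta>\<close> by auto
  have "(real m - 1) * real n ^ m = ((real m - 1) * real m ^ m) * (real n ^ m / real m ^ m)"
    using m by (simp add: field_simps)
  also have "\<dots> < (\<delta> ^ (m + 1) * real n) * (real n ^ m / real m ^ m)"
    using n_big n m by (intro mult_strict_right_mono) auto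
  also have "\<dots> = \<delta> * real n * (\<delta> * real n / real m) ^ m"
    by (simp add: field_simps)
  also have "\<dots> < real (card L) * (\<delta> * real n / real m) ^ m"
    using L pos by (rule mult_strict_right_mono)
  also have "\<dots> \<le> (\<Sum>v\<in>L. real (d v choose m))"
  proof -
    have "(\<delta> * real n / real m) ^ m \<le> real (d v choose m)" if "v \<in> L" for v
    proof -
      have "m \<le> d v" using deg[OF that] m_le by linarith
      have "(\<delta> * real n / real m) ^ m \<le> (real (d v) / real m) ^ m"
        using deg[OF that] m_le m by (intro power_mono divide_right_mono) auto
      also have "\<dots> \<le> real (d v choose m)" by (rule binomial_ge_n_over_k_pow_k[OF \<open>m \<le> d v\<close>])
      finally show ?thesis .
    qed
    moreover have "finite L"
      using L \<open>0 < \<delta>\<close> n by (intro card_ge_0_finite) (metis mult_pos_pos of_nat_0_less_iff order.strict_trans)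
    ultimately show ?thesis using sum_mono[of L "\<lambda>_. (\<delta> * real n / real m) ^ m"] by simp
  qed
  finally show ?thesis .
qed

lemma choose_le_pow_of_le: "k \<le> n \<Longrightarrow> k choose m \<le> n ^ m"
  by (cases "m \<le> k") (auto simp: binomial_eq_0 intro: order.trans[OF binomial_le_pow power_mono])

definition has_biclique :: "'a set set \<Rightarrow> 'a set \<Rightarrow> nat \<Rightarrow> bool" where
  "has_biclique P X m \<longleftrightarrow>
     (\<exists>S T. S \<subseteq> X \<and> T \<subseteq> X \<and> S \<inter> T = {} \<and> card S = m \<and> card T = m \<and>
        (\<forall>s\<in>S. \<forall>t\<in>T. {s, t} \<in> P))"

text \<open>Kovari-Sos-Turan: counting pairs (v, S) with S an m-set of neighbours of a vertex of degree
  at least \<delta> n produces m such vertices with a common m-set of neighbours.\<close>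
lemma has_biclique_in_dense_graph:
  fixes \<delta> :: real
  assumes m: "m \<ge> 1" and "0 < \<delta>" and m_le: "real m \<le> \<delta> * real n"
    and n_big: "(real m - 1) * real m ^ m < \<delta> ^ (m + 1) * real n"
    and X: "X \<subseteq> {0..<n}" and P: "P \<subseteq> {F. F \<subseteq> X \<and> card F = 2}"
    and dense: "\<delta> * real n ^ 2 < real (card P)"
  shows "has_biclique P X m"
proof -
  define N where "N v = {u. {u, v} \<in> P}" for v
  define L where "L = {v\<in>X. \<delta> * real n \<le> real (card (N v))}"
  have fX: "finite X" and cX: "card X \<le> n" using X by (auto intro: finite_subset card_mono[of "{0..<n}", simplified])
  have NX: "N v \<subseteq> X" for v using P by (auto simp: N_def)
  have "(real m - 1) * real n ^ m < (\<Sum>v\<in>L. real (card (N v) choose m))"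
    using card_high_degree_vertices[OF _ X P dense] \<open>0 < \<delta>\<close>
    by (intro sum_choose_high_degrees[OF m \<open>0 < \<delta>\<close> m_le n_big]) (auto simp: L_def N_def)
  moreover have "real ((m - 1) * (card X choose m)) \<le> (real m - 1) * real n ^ m"
    using m choose_le_pow_of_le[OF cX, of m] by (simp add: of_nat_diff mult_left_mono flip: of_nat_power)
  ultimately have "real ((m - 1) * (card X choose m)) < real (\<Sum>v\<in>L. card (N v) choose m)"
    by (simp only: of_nat_sum)
  then have "(m - 1) * (card X choose m) < (\<Sum>v\<in>L. card (N v) choose m)"
    by (simp only: of_nat_less_iff)
  then obtain S where S: "S \<subseteq> X" "card S = m" "m \<le> card {v\<in>L. S \<subseteq> N v}"
    using common_neighbourhood_pigeonhole[of L X N m] fX NX by (auto simp: L_def)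
  then obtain T where T: "T \<subseteq> {v\<in>L. S \<subseteq> N v}" "card T = m" by (meson obtain_subset_with_card_n)
  have "v \<notin> N v" for v using P by (auto simp: N_def)
  then have "S \<inter> T = {}" using T by auto
  moreover have "\<forall>s\<in>S. \<forall>t\<in>T. {s, t} \<in> P" using T by (auto simp: N_def)
  moreover have "T \<subseteq> X" using T by (auto simp: L_def)
  ultimately show ?thesis using S T unfolding has_biclique_def by blast
qed

lemma eventually_has_biclique_in_dense_graphs:
  fixes \<delta> :: real
  assumes "0 < \<delta>"
  shows "\<forall>\<^sub>F n in sequentially. \<forall>X P. X \<subseteq> {0..<n} \<longrightarrow> P \<subseteq> {F. F \<subseteq> X \<and> card F = 2} \<longrightarrow>
           \<delta> * real n ^ 2 < real (card P) \<longrightarrow> has_biclique P X m"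
proof (cases "m = 0")
  case True
  then show ?thesis by (intro always_eventually) (auto simp: has_biclique_def intro!: exI[of _ "{}"])
next
  case False
  have "filterlim (\<lambda>n. c * real n) at_top sequentially" if "c > 0" for c :: real
    using that by (intro filterlim_tendsto_pos_mult_at_top[OF tendsto_const] filterlim_real_sequentially)
  then have "\<forall>\<^sub>F n in sequentially. real m < \<delta> * real n"
    and "\<forall>\<^sub>F n in sequentially. (real m - 1) * real m ^ m < \<delta> ^ (m + 1) * real n"
    using \<open>0 < \<delta>\<close> by (simp_all add: filterlim_at_top_dense)
  then show ?thesis
  proof eventually_elim
    case (elim n)
    have "1 \<le> m" using False by simp
    from has_biclique_in_dense_graph[OF this \<open>0 < \<delta>\<close> less_imp_le[OF elim(1)] elim(2)]
    show ?case by blast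
  qed
qed

lemma card_2_Int_1E:
  assumes "card F = 2" and "card (F \<inter> A) = 1"
  obtains u w where "F = {u, w}" and "u \<in> A" and "w \<notin> A"
proof -
  obtain u where u: "F \<inter> A = {u}" using assms(2) by (auto simp: card_1_singleton_iff)
  then have "u \<in> F" by auto
  then obtain w where "F = {u, w}" "w \<noteq> u" using assms(1) by (auto simp: card_2_iff)
  with u show ?thesis by (intro that[of u w]) auto
qed

lemma subhypergraph_if_has_biclique:
  fixes V :: "'a set" and E :: "'a set set" and G :: "'b set set"
  assumes hg: "hypergraph V E" and sizes: "edge_sizes E \<subseteq> {1, 2}" and bip: "two_graph_bipartite V E"
    and "finite Y" and "has_biclique P Y (card V)" and "P \<subseteq> G" and singletons: "\<forall>v\<in>Y. {v} \<in> G"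
  shows "subhypergraph V E Y G"
proof -
  obtain S T where S: "S \<subseteq> Y" "finite S" "card V \<le> card S" and T: "T \<subseteq> Y" "finite T" "card V \<le> card T"
    and "S \<inter> T = {}" and pairs: "\<forall>s\<in>S. \<forall>t\<in>T. {s, t} \<in> G"
    using assms(4-6) unfolding has_biclique_def by (metis finite_subset order_refl subsetD)
  have fV: "finite V" and EV: "E \<subseteq> Pow V" using hg by (auto simp: hypergraph_def)
  obtain A where A: "A \<subseteq> V" and split: "\<And>F. F \<in> E \<Longrightarrow> card F = 2 \<Longrightarrow> card (F \<inter> A) = 1"
    using bip by (auto simp: two_graph_bipartite_def)
  have "card A \<le> card S" using A fV S by (meson card_mono le_trans)
  then obtain gA where gA: "inj_on gA A" "gA ` A \<subseteq> S"
    using card_le_inj[of A S] finite_subset[OF A fV] S(2) by blast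
  have "card (V - A) \<le> card T" using fV T by (meson Diff_subset card_mono le_trans)
  then obtain gB where gB: "inj_on gB (V - A)" "gB ` (V - A) \<subseteq> T"
    using card_le_inj[of "V - A" T] fV T by blast
  define g where "g v = (if v \<in> A then gA v else gB v)" for v
  have gS: "g u \<in> S" if "u \<in> A" for u using that gA by (auto simp: g_def)
  have gT: "g w \<in> T" if "w \<in> V - A" for w using that gB by (auto simp: g_def)
  have "inj_on g A" using gA(1) inj_on_cong[of A g gA] by (simp add: g_def)
  moreover have "inj_on g (V - A)" using gB(1) inj_on_cong[of "V - A" g gB] by (simp add: g_def)
  moreover have "g ` (A - (V - A)) \<inter> g ` ((V - A) - A) = {}"
    using gS gT \<open>S \<inter> T = {}\<close> by fastforce
  ultimately have "inj_on g (A \<union> (V - A))" by (simp only: inj_on_Un)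
  then have inj: "inj_on g V" using A by (simp add: Un_absorb1)
  have gY: "g ` V \<subseteq> Y" using gS gT S T by blast
  have "g ` F \<in> G" if F: "F \<in> E" for F
  proof -
    have "card F \<in> {1, 2}" using sizes F by (auto simp: edge_sizes_def)
    then consider "card F = 1" | "card F = 2" by blast
    then show ?thesis
    proof cases
      case 1
      then obtain v where "F = {v}" by (auto simp: card_1_singleton_iff)
      then show ?thesis using F EV gY singletons by auto
    next
      case 2
      then obtain u w where "F = {u, w}" "u \<in> A" "w \<notin> A" using card_2_Int_1E[OF 2 split[OF F 2]] by blast
      then show ?thesis using F EV gS gT pairs by auto
    qed
  qed
  then show ?thesis using inj gY unfolding subhypergraph_def by blast
qed

lemma choose_two_real: "real (n choose 2) = real n * (real n - 1) / 2"
proof -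
  have "even (n * (n - 1))" by (induct n) auto
  then have "2 * (n choose 2) = n * (n - 1)" by (simp add: choose_two)
  then have "2 * real (n choose 2) = real n * real (n - 1)" by (metis of_nat_mult of_nat_numeral)
  then show ?thesis by (cases n) auto
qed

lemma card_pairs_not_within:
  assumes "finite U" and "X \<subseteq> U"
  shows "card {F. F \<subseteq> U \<and> card F = 2 \<and> \<not> F \<subseteq> X} = (card U choose 2) - (card X choose 2)"
proof -
  have "finite X" using assms finite_subset by blast
  have "{F. F \<subseteq> U \<and> card F = 2 \<and> \<not> F \<subseteq> X} = {F. F \<subseteq> U \<and> card F = 2} - {F. F \<subseteq> X \<and> card F = 2}"
    using assms(2) by auto
  also have "card \<dots> = card {F. F \<subseteq> U \<and> card F = 2} - card {F. F \<subseteq> X \<and> card F = 2}"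
    using \<open>finite X\<close> assms(2) by (intro card_Diff_subset) (auto intro: rev_finite_subset[of "Pow X"])
  finally show ?thesis by (simp add: n_subsets assms(1) \<open>finite X\<close>)
qed

definition split_density :: "nat \<Rightarrow> nat \<Rightarrow> real" where
  "split_density n k = real k / real n + 1 - real k * (real k - 1) / (real n * (real n - 1))"

lemma split_density_eq:
  assumes "k \<le> n" and "2 \<le> n"
  shows "split_density n k = real k / real n + real ((n choose 2) - (k choose 2)) / real (n choose 2)"
proof -
  have "k choose 2 \<le> n choose 2" using assms(1) by (rule binomial_right_mono)
  moreover have "real (n choose 2) > 0" using assms(2) by (simp add: choose_two_real)
  ultimately show ?thesis using assms(2)
    by (simp add: split_density_def of_nat_diff diff_divide_distrib choose_two_real)
qed

lemma split_density_square:
  assumes "2 \<le> n"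
  shows "split_density n k
    = 5 / 4 + 1 / (4 * (real n - 1)) - (real n - 2 * real k)\<^sup>2 / (4 * (real n * (real n - 1)))"
  using assms by (simp add: split_density_def divide_simps) (simp add: power2_eq_square algebra_simps)

lemma split_density_le:
  assumes "2 \<le> n"
  shows "split_density n k \<le> 5 / 4 + 1 / (4 * (real n - 1))"
proof -
  have "0 \<le> (real n - 2 * real k)\<^sup>2 / (4 * (real n * (real n - 1)))" using assms by simp
  then show ?thesis unfolding split_density_square[OF assms] by linarith
qed

lemma split_density_half:
  assumes "2 \<le> n"
  shows "5 / 4 \<le> split_density n (n div 2)"
proof -
  have "real n - 2 * real (n div 2) = real (n mod 2)"
    using div_mult_mod_eq[of n 2] by (metis add_diff_cancel_left' mult.commute of_nat_add of_nat_mult of_nat_numeral)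
  moreover have "real (n mod 2) \<le> 1" by simp
  ultimately have "(real n - 2 * real (n div 2))\<^sup>2 \<le> 1" by (simp add: power_le_one)
  then have "(real n - 2 * real (n div 2))\<^sup>2 / (4 * (real n * (real n - 1))) \<le> 1 / (4 * (real n * (real n - 1)))"
    using assms by (intro divide_right_mono) auto
  also have "\<dots> \<le> 1 / (4 * (real n - 1))"
  proof -
    have "0 \<le> (real n - 1)\<^sup>2" by simp
    then have "4 * (real n - 1) \<le> 4 * (real n * (real n - 1))"
      unfolding power2_eq_square by (simp add: algebra_simps)
    then show ?thesis by (rule divide_left_mono) (use assms in auto)
  qed
  finally show ?thesis unfolding split_density_square[OF assms] by linarith
qed

lemma h_n_one_two_edges:
  assumes G: "G \<subseteq> Pow {0..<n}" and sizes: "card ` G \<subseteq> {1, 2}"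
  shows "h_n n G = real (card {v. {v} \<in> G}) / real n + real (card {F\<in>G. card F = 2}) / real (n choose 2)"
proof -
  have fG: "finite G" using G by (auto intro: rev_finite_subset[of "Pow {0..<n}"])
  have "G = {F\<in>G. card F = 1} \<union> {F\<in>G. card F = 2}" using sizes by auto
  then have "h_n n G = (\<Sum>F\<in>{F\<in>G. card F = 1}. 1 / real n) + (\<Sum>F\<in>{F\<in>G. card F = 2}. 1 / real (n choose 2))"
    unfolding h_n_def using fG by (subst (1) \<open>G = _\<close>, subst sum.union_disjoint) auto
  moreover have "{F\<in>G. card F = 1} = (\<lambda>v. {v}) ` {v. {v} \<in> G}" by (auto simp: card_1_singleton_iff)
  ultimately show ?thesis by (simp add: card_image divide_inverse)
qed

lemma h_n_le_split_density:
  assumes G: "G \<subseteq> Pow {0..<n}" and sizes: "card ` G \<subseteq> {1, 2}" and "2 \<le> n"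
  defines "X \<equiv> {v. {v} \<in> G}"
  shows "h_n n G \<le> split_density n (card X) + real (card {F\<in>G. card F = 2 \<and> F \<subseteq> X}) / real (n choose 2)"
proof -
  define inner where "inner = {F\<in>G. card F = 2 \<and> F \<subseteq> X}"
  define outer where "outer = {F. F \<subseteq> {0..<n} \<and> card F = 2 \<and> \<not> F \<subseteq> X}"
  have X: "X \<subseteq> {0..<n}" using G by (auto simp: X_def)
  then have k: "card X \<le> n" using card_mono[of "{0..<n}" X] by simp
  have fin: "finite inner" "finite outer" using G
    by (auto simp: inner_def outer_def intro: rev_finite_subset[of "Pow {0..<n}"])
  have "card {F\<in>G. card F = 2} \<le> card (inner \<union> outer)"
    using G fin by (intro card_mono) (auto simp: inner_def outer_def)
  also have "\<dots> \<le> card inner + ((n choose 2) - (card X choose 2))"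
    using card_Un_le[of inner outer] card_pairs_not_within[OF _ X] by (simp add: outer_def)
  finally have "real (card {F\<in>G. card F = 2}) \<le> real (card inner) + real ((n choose 2) - (card X choose 2))"
    by linarith
  moreover have "real (n choose 2) > 0" using \<open>2 \<le> n\<close> by (simp add: choose_two_real)
  ultimately have "real (card {F\<in>G. card F = 2}) / real (n choose 2)
      \<le> real (card inner) / real (n choose 2) + real ((n choose 2) - (card X choose 2)) / real (n choose 2)"
    by (simp add: divide_right_mono flip: add_divide_distrib)
  then show ?thesis
    using h_n_one_two_edges[OF G sizes] split_density_eq[OF k \<open>2 \<le> n\<close>] by (simp add: X_def inner_def)
qed

definition free_hypergraphs :: "'a set \<Rightarrow> 'a set set \<Rightarrow> nat \<Rightarrow> nat set set set" where
  "free_hypergraphs V E n =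
     {G. G \<subseteq> Pow {0..<n} \<and> edge_sizes G \<subseteq> edge_sizes E \<and> \<not> subhypergraph V E {0..<n} G}"

lemma pi_n_eq_Max: "pi_n V E n = Max (h_n n ` free_hypergraphs V E n)"
  unfolding pi_n_def free_hypergraphs_def by (simp add: setcompr_eq_image)

lemma finite_free_hypergraphs: "finite (free_hypergraphs V E n)"
  unfolding free_hypergraphs_def by (auto intro: rev_finite_subset[of "Pow (Pow {0..<n})"])

lemma K2_12_edges:
  assumes "subhypergraph K2_12_V K2_12_E V E"
  obtains a b where "a \<in> V" "b \<in> V" "a \<noteq> b" and "{a} \<in> E" and "{b} \<in> E" and "{a, b} \<in> E"
proof -
  obtain f where f: "inj_on f {1, 2}" "f ` {1, 2} \<subseteq> V" "\<forall>F\<in>{{1}, {2}, {1, 2::nat}}. f ` F \<in> E"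
    using assms unfolding subhypergraph_def K2_12_V_def K2_12_E_def by blast
  have "f 1 \<noteq> f 2" using inj_onD[OF f(1), of 1 2] by auto
  with f show ?thesis by (intro that[of "f 1" "f 2"]) auto
qed

definition split_hypergraph :: "nat \<Rightarrow> nat \<Rightarrow> nat set set" where
  "split_hypergraph n k = (\<lambda>v. {v}) ` {0..<k} \<union> {F. F \<subseteq> {0..<n} \<and> card F = 2 \<and> \<not> F \<subseteq> {0..<k}}"

lemma h_n_split_hypergraph:
  assumes "k \<le> n" and "2 \<le> n"
  shows "h_n n (split_hypergraph n k) = split_density n k"
proof -
  have "split_hypergraph n k \<subseteq> Pow {0..<n}" "card ` split_hypergraph n k \<subseteq> {1, 2}"
    using assms by (auto simp: split_hypergraph_def)
  moreover have "{v. {v} \<in> split_hypergraph n k} = {0..<k}" by (auto simp: split_hypergraph_def)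
  moreover have "{F\<in>split_hypergraph n k. card F = 2} = {F. F \<subseteq> {0..<n} \<and> card F = 2 \<and> \<not> F \<subseteq> {0..<k}}"
    by (auto simp: split_hypergraph_def)
  ultimately show ?thesis
    using assms by (simp add: h_n_one_two_edges card_pairs_not_within split_density_eq)
qed

lemma split_hypergraph_free:
  assumes K: "subhypergraph K2_12_V K2_12_E V E" and "k \<le> n"
  shows "split_hypergraph n k \<in> free_hypergraphs V E n"
proof -
  let ?G = "split_hypergraph n k"
  obtain a b where ab: "a \<in> V" "b \<in> V" "a \<noteq> b" "{a} \<in> E" "{b} \<in> E" "{a, b} \<in> E" using K2_12_edges[OF K] .
  have "edge_sizes ?G \<subseteq> {1, 2}" by (auto simp: edge_sizes_def split_hypergraph_def)
  also have "{1, 2} \<subseteq> edge_sizes E" using ab by (force simp: edge_sizes_def)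
  finally have sizes: "edge_sizes ?G \<subseteq> edge_sizes E" .
  have "\<not> subhypergraph V E {0..<n} ?G"
  proof
    assume "subhypergraph V E {0..<n} ?G"
    then obtain g where g: "inj_on g V" "\<forall>F\<in>E. g ` F \<in> ?G" unfolding subhypergraph_def by blast
    have "g ` {a} \<in> ?G" "g ` {b} \<in> ?G" "g ` {a, b} \<in> ?G" using g(2) ab by blast+
    moreover have "g a \<noteq> g b" using inj_onD[OF g(1), of a b] ab by auto
    ultimately show False by (auto simp: split_hypergraph_def)
  qed
  with sizes \<open>k \<le> n\<close> show ?thesis by (auto simp: free_hypergraphs_def split_hypergraph_def)
qed

lemma pi_n_ge_five_quarters:
  assumes "subhypergraph K2_12_V K2_12_E V E" and "2 \<le> n"
  shows "5 / 4 \<le> pi_n V E n"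
proof -
  have "5 / 4 \<le> h_n n (split_hypergraph n (n div 2))"
    using split_density_half[OF assms(2)] h_n_split_hypergraph[OF _ assms(2)] by simp
  also have "\<dots> \<le> pi_n V E n"
    unfolding pi_n_eq_Max
    by (intro Max_ge finite_imageI finite_free_hypergraphs imageI split_hypergraph_free[OF assms(1)]) simp
  finally show ?thesis .
qed

lemma not_has_biclique_if_free:
  assumes hg: "hypergraph V E" and sizes: "edge_sizes E \<subseteq> {1, 2}" and bip: "two_graph_bipartite V E"
    and free: "G \<in> free_hypergraphs V E n"
  shows "\<not> has_biclique {F\<in>G. card F = 2 \<and> F \<subseteq> {v. {v} \<in> G}} {v. {v} \<in> G} (card V)"
proof
  assume biclique: "has_biclique {F\<in>G. card F = 2 \<and> F \<subseteq> {v. {v} \<in> G}} {v. {v} \<in> G} (card V)"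
  have X: "{v. {v} \<in> G} \<subseteq> {0..<n}" using free by (auto simp: free_hypergraphs_def)
  then have "finite {v. {v} \<in> G}" by (rule finite_subset) simp
  then have "subhypergraph V E {v. {v} \<in> G} G"
    by (rule subhypergraph_if_has_biclique[OF hg sizes bip _ biclique]) auto
  then have "subhypergraph V E {0..<n} G" using X unfolding subhypergraph_def by blast
  with free show False by (simp add: free_hypergraphs_def)
qed

lemma quarter_square_le_choose_two: "2 \<le> n \<Longrightarrow> real n ^ 2 / 4 \<le> real (n choose 2)"
  unfolding choose_two_real by (simp add: power2_eq_square field_simps)

lemma eventually_free_h_n_le:
  fixes \<delta> :: real
  assumes hg: "hypergraph V E" and sizes: "edge_sizes E \<subseteq> {1, 2}" and bip: "two_graph_bipartite V E"
    and "0 < \<delta>"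
  shows "\<forall>\<^sub>F n in sequentially. \<forall>G\<in>free_hypergraphs V E n. h_n n G \<le> 5 / 4 + 1 / (4 * (real n - 1)) + \<delta>"
proof -
  have "0 < \<delta> / 4" using \<open>0 < \<delta>\<close> by simp
  from eventually_ge_at_top[of "2::nat"] eventually_has_biclique_in_dense_graphs[OF this, of "card V"]
  show ?thesis
  proof eventually_elim
    case (elim n)
    show ?case
    proof
      fix G assume free: "G \<in> free_hypergraphs V E n"
      define X where "X = {v. {v} \<in> G}"
      define P where "P = {F\<in>G. card F = 2 \<and> F \<subseteq> X}"
      have G: "G \<subseteq> Pow {0..<n}" and "card ` G \<subseteq> card ` E"
        using free by (auto simp: free_hypergraphs_def edge_sizes_def)
      with sizes have G_sizes: "card ` G \<subseteq> {1, 2}" unfolding edge_sizes_def by blast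
      have X: "X \<subseteq> {0..<n}" using G by (auto simp: X_def)
      have "P \<subseteq> {F. F \<subseteq> X \<and> card F = 2}" by (auto simp: P_def)
      with elim(2) X not_has_biclique_if_free[OF hg sizes bip free]
      have "real (card P) \<le> \<delta> / 4 * real n ^ 2" unfolding P_def X_def by (meson not_less)
      also have "\<dots> \<le> \<delta> * real (n choose 2)"
        using quarter_square_le_choose_two[OF elim(1)] \<open>0 < \<delta>\<close> by simp
      finally have "real (card P) / real (n choose 2) \<le> \<delta>"
        using elim(1) by (simp add: divide_le_eq choose_two_real)
      moreover note split_density_le[OF elim(1), of "card X"]
      ultimately show "h_n n G \<le> 5 / 4 + 1 / (4 * (real n - 1)) + \<delta>"
        using h_n_le_split_density[OF G G_sizes elim(1)] unfolding X_def P_def by linarith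
    qed
  qed
qed

lemma eventually_inverse_pred_less:
  fixes \<epsilon> :: real
  assumes "0 < \<epsilon>"
  shows "\<forall>\<^sub>F n in sequentially. 1 / (4 * (real n - 1)) < \<epsilon>"
proof -
  have "\<forall>\<^sub>F n in sequentially. 1 / (4 * \<epsilon>) < real n - 1"
    using filterlim_real_sequentially by (simp add: filterlim_at_top_dense less_diff_eq)
  then show ?thesis
  proof eventually_elim
    case (elim n)
    have "0 < 1 / (4 * \<epsilon>)" using assms by simp
    then have "0 < real n - 1" using elim by (rule order.strict_trans)
    moreover have "1 < (real n - 1) * (4 * \<epsilon>)" using elim assms by (simp add: divide_less_eq)
    ultimately show ?case by (simp add: divide_less_eq algebra_simps)
  qed
qed

lemma eventually_pi_n_le:
  fixes \<epsilon> :: real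
  assumes "hypergraph V E" and "edge_sizes E \<subseteq> {1, 2}" and "two_graph_bipartite V E"
    and K: "subhypergraph K2_12_V K2_12_E V E" and "0 < \<epsilon>"
  shows "\<forall>\<^sub>F n in sequentially. pi_n V E n \<le> 5 / 4 + \<epsilon>"
proof -
  have "0 < \<epsilon> / 2" using \<open>0 < \<epsilon>\<close> by simp
  from eventually_inverse_pred_less[OF this] eventually_free_h_n_le[OF assms(1-3) \<open>0 < \<epsilon> / 2\<close>]
  show ?thesis
  proof eventually_elim
    case (elim n)
    have "pi_n V E n \<le> 5 / 4 + 1 / (4 * (real n - 1)) + \<epsilon> / 2"
      unfolding pi_n_eq_Max using elim(2) split_hypergraph_free[OF K, of 0 n]
      by (intro Max.boundedI finite_imageI finite_free_hypergraphs) auto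
    with elim(1) show ?case by argo
  qed
qed

theorem mainTheorem8:
  fixes V :: "'a set" and E :: "'a set set"
  assumes "hypergraph V E"
    and "edge_sizes E = {1, 2}"
    and "two_graph_bipartite V E"
    and "subhypergraph K2_12_V K2_12_E V E"
  shows "(\<lambda>n. pi_n V E n) \<longlonglongrightarrow> 5 / 4"
proof (rule order_tendstoI)
  fix a :: real assume "a < 5 / 4"
  from eventually_ge_at_top[of "2::nat"] show "\<forall>\<^sub>F n in sequentially. a < pi_n V E n"
    by eventually_elim (use pi_n_ge_five_quarters[OF assms(4)] \<open>a < 5 / 4\<close> in fastforce)
next
  fix a :: real assume "5 / 4 < a"
  then have "0 < (a - 5 / 4) / 2" by simp
  from eventually_pi_n_le[OF assms(1) equalityD1[OF assms(2)] assms(3,4) this]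
  show "\<forall>\<^sub>F n in sequentially. pi_n V E n < a"
  proof eventually_elim
    case (elim n)
    with \<open>5 / 4 < a\<close> show ?case by argo
  qed
qed

end
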